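(* Let $A$ be a selfadjoint operator on a separable infinite-dimensional Hilbert space $\mathcal{H}$, and let $\mathcal{L}$ be either an $A$-regular Galerkin sequence or, if $A\ge0$, an $A^{1/2}$-regular Galerkin sequence. Let $\lambda\in\mathbb{R}$, $n_k\to\infty$, and $x_k\in\mathcal{L}_{n_k}$ with $\|x_k\|=1$, $x_k\rightharpoonup x$ weakly in $\mathcal{H}$ and $\pi_{n_k}(A-\lambda)x_k\to0$. Then $x\in\operatorname{Ker}(A-\lambda)$.
   Context: A sequence $\mathcal{L}=(\mathcal{L}_n)$ of finite-dimensional subspaces $\mathcal{L}_n\subset\operatorname{D}(A)$ is $A$-regular if for every $f\in\operatorname{D}(A)$ there exist $f_n\in\mathcal{L}_n$ with $\|f_n-f\|+\|Af_n-Af\|\to0$; then $A_n=\pi_nA|_{\mathcal{L}_n}$, $\pi_n$ the orthogonal projection onto $\mathcal{L}_n$. If $A\ge0$, finite-dimensional $\mathcal{L}_n\subset\operatorname{D}(A^{1/2})$ form an $A^{1/2}$-regular sequence if every $f\in\operatorname{D}(A^{1/2})$ is the limit of some $f_n\in\mathcal{L}_n$ in the norm $\|\cdot\|+\|A^{1/2}\cdot\|$; then $A_n:\mathcal{L}_n\to\mathcal{L}_n$ is defined by $\langle y,A_nx\rangle=\langle A^{1/2}y,A^{1/2}x\rangle$. In both cases $\pi_n(A-\lambda)x:=A_nx-\lambda x$ for $x\in\mathcal{L}_n$. *)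

theory Defs
  imports "HOL-Analysis.Analysis"
begin

text \<open>
  A complex Hilbert space is modelled as a real Hilbert space
  (type class real_inner + complete_space) equipped with a complex structure J
  (multiplication by the imaginary unit).  The complex inner product is then
  inner x y + i * inner x (J y) (up to convention); its real part is the real
  inner product, so orthogonality, orthogonal projections onto complex
  subspaces, weak convergence, adjoints of complex-linear operators and kernels
  are the same whether computed with the real or the complex inner product.
  Unbounded operators are pairs (D, A) of a domain D and a function A whose
  values outside D are irrelevant.
\<close>

definition complex_structure :: "('a::real_inner \<Rightarrow> 'a) \<Rightarrow> bool" where
  "complex_structure J \<longleftrightarrow> linear J \<and> (\<forall>x. J (J x) = - x)
      \<and> (\<forall>x y. inner (J x) (J y) = inner x y)"

definition complex_subspace :: "('a::real_inner \<Rightarrow> 'a) \<Rightarrow> 'a set \<Rightarrow> bool" where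
  "complex_subspace J S \<longleftrightarrow> subspace S \<and> (\<forall>x\<in>S. J x \<in> S)"

definition finite_dimensional :: "'a::real_vector set \<Rightarrow> bool" where
  "finite_dimensional S \<longleftrightarrow> (\<exists>B. finite B \<and> B \<subseteq> S \<and> span B = span S)"

definition separable_space :: "'a::metric_space itself \<Rightarrow> bool" where
  "separable_space _ \<longleftrightarrow> (\<exists>C::'a set. countable C \<and> closure C = UNIV)"

definition complex_linear_op ::
    "('a::real_inner \<Rightarrow> 'a) \<Rightarrow> 'a set \<Rightarrow> ('a \<Rightarrow> 'a) \<Rightarrow> bool" where
  "complex_linear_op J D A \<longleftrightarrow> complex_subspace J D
     \<and> (\<forall>x\<in>D. \<forall>y\<in>D. A (x + y) = A x + A y)
     \<and> (\<forall>x\<in>D. \<forall>c. A (c *\<^sub>R x) = c *\<^sub>R A x)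
     \<and> (\<forall>x\<in>D. A (J x) = J (A x))"

definition adjoint_domain :: "'a set \<Rightarrow> ('a::real_inner \<Rightarrow> 'a) \<Rightarrow> 'a set" where
  "adjoint_domain D A = {y. \<exists>z. \<forall>x\<in>D. inner (A x) y = inner x z}"

definition selfadjoint_op ::
    "('a::real_inner \<Rightarrow> 'a) \<Rightarrow> 'a set \<Rightarrow> ('a \<Rightarrow> 'a) \<Rightarrow> bool" where
  "selfadjoint_op J D A \<longleftrightarrow> complex_linear_op J D A \<and> closure D = UNIV
     \<and> adjoint_domain D A = D
     \<and> (\<forall>x\<in>D. \<forall>y\<in>D. inner (A x) y = inner x (A y))"

definition nonneg_op :: "'a set \<Rightarrow> ('a::real_inner \<Rightarrow> 'a) \<Rightarrow> bool" where
  "nonneg_op D A \<longleftrightarrow> (\<forall>x\<in>D. inner (A x) x \<ge> 0)"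

definition is_sqrt_op ::
    "('a::real_inner \<Rightarrow> 'a) \<Rightarrow> 'a set \<Rightarrow> ('a \<Rightarrow> 'a) \<Rightarrow> 'a set \<Rightarrow> ('a \<Rightarrow> 'a) \<Rightarrow> bool" where
  "is_sqrt_op J D A DS S \<longleftrightarrow> selfadjoint_op J DS S \<and> nonneg_op DS S
     \<and> D = {x\<in>DS. S x \<in> DS} \<and> (\<forall>x\<in>D. S (S x) = A x)"

definition galerkin_seq :: "('a::real_inner \<Rightarrow> 'a) \<Rightarrow> (nat \<Rightarrow> 'a set) \<Rightarrow> bool" where
  "galerkin_seq J L \<longleftrightarrow> (\<forall>n. complex_subspace J (L n) \<and> finite_dimensional (L n))"

definition op_regular ::
    "'a set \<Rightarrow> ('a::real_normed_vector \<Rightarrow> 'a) \<Rightarrow> (nat \<Rightarrow> 'a set) \<Rightarrow> bool" where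
  "op_regular D T L \<longleftrightarrow> (\<forall>n. L n \<subseteq> D) \<and>
     (\<forall>f\<in>D. \<exists>fs. (\<forall>n. fs n \<in> L n) \<and>
        (\<lambda>n. norm (fs n - f) + norm (T (fs n) - T f)) \<longlonglongrightarrow> 0)"

definition orth_proj :: "'a set \<Rightarrow> 'a::real_inner \<Rightarrow> 'a" where
  "orth_proj S x = (THE y. y \<in> S \<and> (\<forall>z\<in>S. inner (x - y) z = 0))"

definition galerkin_op :: "(nat \<Rightarrow> 'a set) \<Rightarrow> ('a::real_inner \<Rightarrow> 'a) \<Rightarrow> nat \<Rightarrow> 'a \<Rightarrow> 'a" where
  "galerkin_op L A n x = orth_proj (L n) (A x)"

definition galerkin_form_op ::
    "(nat \<Rightarrow> 'a set) \<Rightarrow> ('a::real_inner \<Rightarrow> 'a) \<Rightarrow> nat \<Rightarrow> 'a \<Rightarrow> 'a" where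
  "galerkin_form_op L S n x =
     (THE w. w \<in> L n \<and> (\<forall>y\<in>L n. inner y w = inner (S y) (S x)))"

definition weakly_conv :: "(nat \<Rightarrow> 'a::real_inner) \<Rightarrow> 'a \<Rightarrow> bool" where
  "weakly_conv xs x \<longleftrightarrow> (\<forall>y. (\<lambda>k. inner (xs k) y) \<longlonglongrightarrow> inner x y)"

end

theory Submission
  imports Defs
begin

text \<open>
  For f in the domain choose g_k in L (n_k) converging to f in graph norm.  By the Galerkin
  relation the pairing of A g_k with x_k equals the pairing of g_k with the compression applied
  to x_k, which tends to lam times the pairing of f with x; since A g_k converges strongly and
  x_k weakly with bounded norms, the same pairing also tends to the pairing of A f with x.
  Thus the pairing of A f with x is that of f with lam x for all f in the domain, so x lies in
  the domain of the adjoint, which is the domain of A, and A x = lam x.  In the form case the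
  pairing of S g_k with S x_k plays the same role; S x_k is bounded because its squared norm is
  the pairing of x_k with the compression applied to x_k.
\<close>

lemma riesz_representer_insert_orthogonal:
  fixes a w :: "'a::real_inner"
  assumes w: "w \<in> span B" "\<forall>z\<in>span B. inner z w = \<phi> z"
    and orth: "\<forall>z\<in>span B. inner z a = 0" and "a \<noteq> 0"
    and add: "\<forall>x\<in>span (insert a B). \<forall>y\<in>span (insert a B). \<phi> (x + y) = \<phi> x + \<phi> y"
    and scale: "\<forall>x\<in>span (insert a B). \<forall>c. \<phi> (c *\<^sub>R x) = c * \<phi> x"
  shows "\<exists>w'\<in>span (insert a B). \<forall>z\<in>span (insert a B). inner z w' = \<phi> z"
proof -
  define w' where "w' = w + (\<phi> a / inner a a) *\<^sub>R a"
  have sub: "span B \<subseteq> span (insert a B)" by (simp add: span_mono subset_insertI)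
  have a_in: "a \<in> span (insert a B)" by (simp add: span_base)
  have "w' \<in> span (insert a B)"
    unfolding w'_def using w(1) sub a_in by (meson span_add span_scale subsetD)
  moreover have "inner z w' = \<phi> z" if z: "z \<in> span (insert a B)" for z
  proof -
    obtain c where b: "z - c *\<^sub>R a \<in> span B" using z span_breakdown_eq by blast
    have "inner a w = 0" "inner (z - c *\<^sub>R a) a = 0"
      using orth w(1) b by (auto simp: inner_commute)
    then have "inner z w' = inner (z - c *\<^sub>R a) w + c * \<phi> a"
      using \<open>a \<noteq> 0\<close> unfolding w'_def
      by (simp add: algebra_simps)
    also have "\<dots> = \<phi> (z - c *\<^sub>R a) + \<phi> (c *\<^sub>R a)"
      using w(2) b scale a_in by simp
    also have "\<dots> = \<phi> z"
      using add b sub a_in by (metis diff_add_cancel span_scale subsetD)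
    finally show ?thesis .
  qed
  ultimately show ?thesis by blast
qed

lemma finite_span_riesz_representation:
  fixes B :: "'a::real_inner set"
  assumes "finite B"
    and "\<forall>x\<in>span B. \<forall>y\<in>span B. \<phi> (x + y) = \<phi> x + \<phi> y"
    and "\<forall>x\<in>span B. \<forall>c. \<phi> (c *\<^sub>R x) = c * \<phi> x"
  shows "\<exists>w\<in>span B. \<forall>z\<in>span B. inner z w = \<phi> z"
  using assms
proof (induction B arbitrary: \<phi>)
  case empty
  then have "\<phi> 0 = 0" by (metis mult_zero_left scale_zero_left span_zero)
  then show ?case by auto
next
  case (insert a B)
  \<comment> \<open>q is the orthogonal projection of a onto span B (one Gram--Schmidt step).\<close>
  obtain q where q: "q \<in> span B" "\<forall>z\<in>span B. inner z q = inner z a"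
    using insert.IH[of "\<lambda>z. inner z a"] by (auto simp: inner_add_left)
  have "x - k *\<^sub>R (a - q) \<in> span B \<longleftrightarrow> x - k *\<^sub>R a \<in> span B" for x k
  proof -
    have "x - k *\<^sub>R (a - q) = (x - k *\<^sub>R a) + k *\<^sub>R q" by (simp add: algebra_simps)
    then show ?thesis using q(1) by (metis add_diff_cancel span_add span_diff span_scale)
  qed
  then have span_eq: "span (insert (a - q) B) = span (insert a B)"
    by (auto simp: span_breakdown_eq)
  show ?case
  proof (cases "a - q = 0")
    case True
    then have "span (insert a B) = span B" using q(1) by (simp add: span_redundant)
    then show ?thesis using insert.IH insert.prems by simp
  next
    case False
    have sub: "span B \<subseteq> span (insert a B)" by (simp add: span_mono subset_insertI)
    obtain w where "w \<in> span B" "\<forall>z\<in>span B. inner z w = \<phi> z"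
      using insert.IH[of \<phi>] insert.prems sub by (meson subsetD)
    moreover have "\<forall>z\<in>span B. inner z (a - q) = 0"
      using q by (simp add: inner_diff_right)
    ultimately show ?thesis
      using riesz_representer_insert_orthogonal[of w B \<phi> "a - q"] False insert.prems
      unfolding span_eq by blast
  qed
qed

lemma finite_dimensional_riesz_representation:
  fixes S :: "'a::real_inner set"
  assumes "subspace S" "finite_dimensional S"
    and "\<forall>x\<in>S. \<forall>y\<in>S. \<phi> (x + y) = \<phi> x + \<phi> y" "\<forall>x\<in>S. \<forall>c. \<phi> (c *\<^sub>R x) = c * \<phi> x"
  shows "\<exists>!w. w \<in> S \<and> (\<forall>z\<in>S. inner z w = \<phi> z)"
proof -
  obtain B where "finite B" "span B = S"
    using assms(1,2) unfolding finite_dimensional_def by (metis span_eq_iff)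
  then obtain w where w: "w \<in> S" "\<forall>z\<in>S. inner z w = \<phi> z"
    using finite_span_riesz_representation assms(3,4) by metis
  moreover have "v = w" if v: "v \<in> S" "\<forall>z\<in>S. inner z v = \<phi> z" for v
  proof -
    have "v - w \<in> S" using v(1) w(1) assms(1) by (simp add: subspace_diff)
    then have "inner (v - w) (v - w) = 0" using v(2) w(2) by (simp add: inner_diff_right)
    then show ?thesis by simp
  qed
  ultimately show ?thesis by blast
qed

lemma orth_proj_characterization:
  fixes S :: "'a::real_inner set"
  assumes "subspace S" "finite_dimensional S"
  shows "orth_proj S v \<in> S" "\<forall>z\<in>S. inner z (orth_proj S v) = inner z v"
proof -
  have iff: "inner (v - w) z = 0 \<longleftrightarrow> inner z w = inner z v" for w z
    by (auto simp: inner_diff_left inner_commute[of z])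
  have "\<exists>!w. w \<in> S \<and> (\<forall>z\<in>S. inner z w = inner z v)"
    using finite_dimensional_riesz_representation[OF assms] by (simp add: inner_add_left)
  then have "orth_proj S v \<in> S \<and> (\<forall>z\<in>S. inner (v - orth_proj S v) z = 0)"
    unfolding orth_proj_def iff by (rule theI')
  then show "orth_proj S v \<in> S" "\<forall>z\<in>S. inner z (orth_proj S v) = inner z v"
    unfolding iff by blast+
qed

lemma galerkin_form_op_characterization:
  fixes S :: "'a::real_inner \<Rightarrow> 'a"
  assumes "subspace (L n)" "finite_dimensional (L n)"
    and "\<forall>x\<in>L n. \<forall>y\<in>L n. S (x + y) = S x + S y" "\<forall>x\<in>L n. \<forall>c. S (c *\<^sub>R x) = c *\<^sub>R S x"
  shows "galerkin_form_op L S n v \<in> L n"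
    "\<forall>y\<in>L n. inner y (galerkin_form_op L S n v) = inner (S y) (S v)"
proof -
  have "\<exists>!w. w \<in> L n \<and> (\<forall>y\<in>L n. inner y w = inner (S y) (S v))"
    using finite_dimensional_riesz_representation[OF assms(1,2)] assms(3,4)
    by (simp add: inner_add_left)
  then have "galerkin_form_op L S n v \<in> L n
      \<and> (\<forall>y\<in>L n. inner y (galerkin_form_op L S n v) = inner (S y) (S v))"
    unfolding galerkin_form_op_def by (rule theI')
  then show "galerkin_form_op L S n v \<in> L n"
    "\<forall>y\<in>L n. inner y (galerkin_form_op L S n v) = inner (S y) (S v)"
    by blast+
qed

lemma tendsto_inner_bounded:
  fixes a b :: "nat \<Rightarrow> 'a::real_inner"
  assumes a: "a \<longlonglongrightarrow> a0" and b: "\<forall>k. norm (b k) \<le> M"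
    and lim: "(\<lambda>k. inner a0 (b k)) \<longlonglongrightarrow> l"
  shows "(\<lambda>k. inner (a k) (b k)) \<longlonglongrightarrow> l"
proof -
  have "\<forall>k. norm (inner (a k - a0) (b k)) \<le> norm (a k - a0) * M"
  proof
    fix k
    have "norm (inner (a k - a0) (b k)) \<le> norm (a k - a0) * norm (b k)"
      using Cauchy_Schwarz_ineq2 by simp
    also have "\<dots> \<le> norm (a k - a0) * M" using b by (simp add: mult_left_mono)
    finally show "norm (inner (a k - a0) (b k)) \<le> norm (a k - a0) * M" .
  qed
  moreover have "(\<lambda>k. norm (a k - a0) * M) \<longlonglongrightarrow> 0"
    using a by (intro tendsto_mult_left_zero) (simp add: tendsto_norm_zero LIM_zero)
  ultimately have "(\<lambda>k. inner (a k - a0) (b k)) \<longlonglongrightarrow> 0"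
    by (rule Lim_null_comparison[OF always_eventually])
  from tendsto_add[OF this lim] show ?thesis by (simp add: inner_diff_left)
qed

lemma op_regular_approx_subseq:
  assumes reg: "op_regular D T L" and f: "f \<in> D" and nk: "filterlim nk at_top sequentially"
  obtains g where "\<forall>k. g k \<in> L (nk k)" "g \<longlonglongrightarrow> f" "(\<lambda>k. T (g k)) \<longlonglongrightarrow> T f"
proof -
  obtain fs where fs: "\<forall>n. fs n \<in> L n"
    and lim: "(\<lambda>n. norm (fs n - f) + norm (T (fs n) - T f)) \<longlonglongrightarrow> 0"
    using reg f unfolding op_regular_def by blast
  have "(\<lambda>n. norm (fs n - f)) \<longlonglongrightarrow> 0" "(\<lambda>n. norm (T (fs n) - T f)) \<longlonglongrightarrow> 0"
    by (rule tendsto_sandwich[OF _ _ tendsto_const lim]; simp)+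
  then have "fs \<longlonglongrightarrow> f" "(\<lambda>n. T (fs n)) \<longlonglongrightarrow> T f"
    by (simp_all add: tendsto_norm_zero_iff LIM_zero_iff)
  then show ?thesis
    using that[of "\<lambda>k. fs (nk k)"] fs filterlim_compose[OF _ nk] by blast
qed

lemma weakly_conv_inner_left:
  assumes "weakly_conv xs x"
  shows "(\<lambda>k. inner y (xs k)) \<longlonglongrightarrow> inner y x"
  using assms unfolding weakly_conv_def inner_commute[of y] by blast

lemma galerkin_residual_pairing_limit:
  fixes g w xs :: "nat \<Rightarrow> 'a::real_inner"
  assumes g: "g \<longlonglongrightarrow> f" and res: "(\<lambda>k. w k - lam *\<^sub>R xs k) \<longlonglongrightarrow> 0"
    and weak: "weakly_conv xs x" and bounded: "\<forall>k. norm (xs k) \<le> M"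
  shows "(\<lambda>k. inner (g k) (w k)) \<longlonglongrightarrow> lam * inner f x"
proof -
  have "(\<lambda>k. inner (g k) (w k - lam *\<^sub>R xs k)) \<longlonglongrightarrow> inner f 0"
    by (rule tendsto_inner[OF g res])
  moreover have "(\<lambda>k. inner (g k) (xs k)) \<longlonglongrightarrow> inner f x"
    using tendsto_inner_bounded[OF g bounded weakly_conv_inner_left[OF weak]] .
  ultimately have "(\<lambda>k. inner (g k) (w k - lam *\<^sub>R xs k) + lam * inner (g k) (xs k))
      \<longlonglongrightarrow> 0 + lam * inner f x"
    by (intro tendsto_add tendsto_mult_left) simp_all
  then show ?thesis by (simp add: inner_diff_right)
qed

lemma selfadjoint_op_eigenvector:
  assumes sa: "selfadjoint_op J D A" and h: "\<forall>f\<in>D. inner (A f) x = inner f (lam *\<^sub>R x)"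
  shows "x \<in> D \<and> A x = lam *\<^sub>R x"
proof -
  have xD: "x \<in> D" using sa h unfolding selfadjoint_op_def adjoint_domain_def by blast
  define v where "v = A x - lam *\<^sub>R x"
  have "D \<subseteq> {y. inner y v = 0}"
  proof
    fix y assume y: "y \<in> D"
    have "inner (A y) x = inner y (A x)" using sa y xD unfolding selfadjoint_op_def by blast
    then show "y \<in> {y. inner y v = 0}" using h y by (simp add: v_def inner_diff_right)
  qed
  moreover have "closed {y. inner y v = 0}"
    by (intro closed_Collect_eq continuous_intros)
  ultimately have "closure D \<subseteq> {y. inner y v = 0}" by (rule closure_minimal)
  then have "inner v v = 0" using sa unfolding selfadjoint_op_def by blast
  then show ?thesis using xD by (simp add: v_def)
qed

lemma galerkin_op_limit_eigenvector:
  fixes xs :: "nat \<Rightarrow> 'a::real_inner"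
  assumes sa: "selfadjoint_op J D A" and gal: "galerkin_seq J L" and reg: "op_regular D A L"
    and nk: "filterlim nk at_top sequentially"
    and xs_in: "\<forall>k. xs k \<in> L (nk k)" and xs_norm: "\<forall>k. norm (xs k) = 1"
    and weak: "weakly_conv xs x"
    and res: "(\<lambda>k. galerkin_op L A (nk k) (xs k) - lam *\<^sub>R xs k) \<longlonglongrightarrow> 0"
  shows "x \<in> D \<and> A x = lam *\<^sub>R x"
proof (rule selfadjoint_op_eigenvector[OF sa], intro ballI)
  fix f assume f: "f \<in> D"
  obtain g where g: "\<forall>k. g k \<in> L (nk k)" "g \<longlonglongrightarrow> f" "(\<lambda>k. A (g k)) \<longlonglongrightarrow> A f"
    using op_regular_approx_subseq[OF reg f nk] .
  have "inner (A (g k)) (xs k) = inner (g k) (galerkin_op L A (nk k) (xs k))" for k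
  proof -
    have "subspace (L n)" "finite_dimensional (L n)" for n
      using gal unfolding galerkin_seq_def complex_subspace_def by auto
    moreover have "g k \<in> D" "xs k \<in> D" using reg g(1) xs_in unfolding op_regular_def by blast+
    ultimately show ?thesis
      using sa g(1) orth_proj_characterization(2) unfolding selfadjoint_op_def galerkin_op_def
      by metis
  qed
  then have "(\<lambda>k. inner (A (g k)) (xs k)) \<longlonglongrightarrow> lam * inner f x"
    using galerkin_residual_pairing_limit[OF g(2) res weak, of 1] xs_norm by simp
  moreover have "(\<lambda>k. inner (A (g k)) (xs k)) \<longlonglongrightarrow> inner (A f) x"
    using xs_norm weakly_conv_inner_left[OF weak]
    by (intro tendsto_inner_bounded[OF g(3), of _ 1]) simp_all
  ultimately show "inner (A f) x = inner f (lam *\<^sub>R x)"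
    using LIMSEQ_unique by fastforce
qed

lemma galerkin_form_op_limit_eigenvector:
  fixes xs :: "nat \<Rightarrow> 'a::real_inner"
  assumes sa: "selfadjoint_op J D A" and gal: "galerkin_seq J L"
    and sq: "is_sqrt_op J D A DS S" and reg: "op_regular DS S L"
    and nk: "filterlim nk at_top sequentially"
    and xs_in: "\<forall>k. xs k \<in> L (nk k)" and xs_norm: "\<forall>k. norm (xs k) = 1"
    and weak: "weakly_conv xs x"
    and res: "(\<lambda>k. galerkin_form_op L S (nk k) (xs k) - lam *\<^sub>R xs k) \<longlonglongrightarrow> 0"
  shows "x \<in> D \<and> A x = lam *\<^sub>R x"
proof (rule selfadjoint_op_eigenvector[OF sa], intro ballI)
  define w where "w k = galerkin_form_op L S (nk k) (xs k)" for k
  have saS: "selfadjoint_op J DS S" and D_eq: "D = {x\<in>DS. S x \<in> DS}"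
    and SS: "\<forall>x\<in>D. S (S x) = A x" using sq unfolding is_sqrt_op_def by blast+
  have LDS: "L n \<subseteq> DS" for n using reg unfolding op_regular_def by blast
  have w_repr: "\<forall>y\<in>L (nk k). inner y (w k) = inner (S y) (S (xs k))" for k
  proof -
    have "subspace (L n)" "finite_dimensional (L n)" for n
      using gal unfolding galerkin_seq_def complex_subspace_def by auto
    moreover have "\<forall>x\<in>L n. \<forall>y\<in>L n. S (x + y) = S x + S y"
      "\<forall>x\<in>L n. \<forall>c. S (c *\<^sub>R x) = c *\<^sub>R S x" for n
      using saS LDS unfolding selfadjoint_op_def complex_linear_op_def by blast+
    ultimately show ?thesis unfolding w_def by (rule galerkin_form_op_characterization(2))
  qed
  obtain K where K: "\<And>k. norm (w k - lam *\<^sub>R xs k) \<le> K"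
    using convergent_imp_Bseq[OF convergentI[OF res[folded w_def]]] unfolding Bseq_def by blast
  have S_xs_bound: "\<forall>k. norm (S (xs k)) \<le> sqrt (K + \<bar>lam\<bar>)"
  proof
    fix k
    have "(norm (S (xs k)))\<^sup>2 = inner (xs k) (w k)"
      using w_repr[of k] xs_in by (simp add: power2_norm_eq_inner)
    also have "\<dots> \<le> norm (w k)" using norm_cauchy_schwarz[of "xs k" "w k"] xs_norm by simp
    also have "\<dots> \<le> norm (lam *\<^sub>R xs k) + norm (w k - lam *\<^sub>R xs k)"
      by (rule norm_triangle_sub)
    also have "\<dots> \<le> K + \<bar>lam\<bar>" using K[of k] xs_norm by simp
    finally show "norm (S (xs k)) \<le> sqrt (K + \<bar>lam\<bar>)" by (rule real_le_rsqrt)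
  qed
  fix f assume f: "f \<in> D"
  then have f_DS: "f \<in> DS" "S f \<in> DS" using D_eq by auto
  obtain g where g: "\<forall>k. g k \<in> L (nk k)" "g \<longlonglongrightarrow> f" "(\<lambda>k. S (g k)) \<longlonglongrightarrow> S f"
    using op_regular_approx_subseq[OF reg f_DS(1) nk] .
  have "(\<lambda>k. inner (S (g k)) (S (xs k))) \<longlonglongrightarrow> lam * inner f x"
    using galerkin_residual_pairing_limit[OF g(2) res[folded w_def] weak, of 1] xs_norm
      w_repr g(1)
    by simp
  moreover have "(\<lambda>k. inner (S (g k)) (S (xs k))) \<longlonglongrightarrow> inner (A f) x"
  proof (rule tendsto_inner_bounded[OF g(3) S_xs_bound])
    have "inner (S (S f)) (xs k) = inner (S f) (S (xs k))" for k
    proof -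
      have "xs k \<in> DS" using xs_in LDS by blast
      then show ?thesis using saS f_DS(2) unfolding selfadjoint_op_def by blast
    qed
    then have "inner (S f) (S (xs k)) = inner (A f) (xs k)" for k
      using SS f by simp
    then show "(\<lambda>k. inner (S f) (S (xs k))) \<longlonglongrightarrow> inner (A f) x"
      using weakly_conv_inner_left[OF weak] by simp
  qed
  ultimately show "inner (A f) x = inner f (lam *\<^sub>R x)"
    using LIMSEQ_unique by fastforce
qed

theorem lemma3p2:
  fixes J :: "'a::{real_inner, complete_space} \<Rightarrow> 'a"
    and D :: "'a set" and A :: "'a \<Rightarrow> 'a"
    and L :: "nat \<Rightarrow> 'a set"
    and lam :: real and nk :: "nat \<Rightarrow> nat" and xs :: "nat \<Rightarrow> 'a" and x :: 'a
  assumes cs: "complex_structure J"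
    and sep: "separable_space TYPE('a)"
    and infdim: "\<not> finite_dimensional (UNIV :: 'a set)"
    and sa: "selfadjoint_op J D A"
    and gal: "galerkin_seq J L"
    and nk: "filterlim nk at_top sequentially"
    and xs_in: "\<forall>k. xs k \<in> L (nk k)"
    and xs_norm: "\<forall>k. norm (xs k) = 1"
    and weak: "weakly_conv xs x"
  shows "(op_regular D A L \<longrightarrow>
            (\<lambda>k. galerkin_op L A (nk k) (xs k) - lam *\<^sub>R xs k) \<longlonglongrightarrow> 0 \<longrightarrow>
            x \<in> D \<and> A x = lam *\<^sub>R x)
       \<and> (\<forall>DS S. nonneg_op D A \<and> is_sqrt_op J D A DS S \<and> op_regular DS S L \<longrightarrow>
            (\<lambda>k. galerkin_form_op L S (nk k) (xs k) - lam *\<^sub>R xs k) \<longlonglongrightarrow> 0 \<longrightarrow>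
            x \<in> D \<and> A x = lam *\<^sub>R x)"
  using galerkin_op_limit_eigenvector[OF sa gal _ nk xs_in xs_norm weak]
    galerkin_form_op_limit_eigenvector[OF sa gal _ _ nk xs_in xs_norm weak]
  by blast

end
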